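(* Consider the system $\dot v_1=-v_1^2+v_2$, $\dot v_2=-v_1v_2$ with initial data $(v_1(0),v_2(0))\in\mathbb{R}^2$. Its solution blows up in finite positive time if and only if one of the following holds: $v_2(0)<0$; or $v_2(0)=0$ and $v_1(0)<0$; or $v_2(0)>0$, $v_1(0)<0$ and $v_1(0)^2\ge 2v_2(0)$.
   Context: This is the extended system $\dot{\mathbf v}=-v_1\mathbf v+Q\mathbf v$ with $Q=\begin{pmatrix}0&1\\0&0\end{pmatrix}$, governing $(v_1,v_2)=(V_x,E_x)$ along characteristics for the pressureless Euler–Poisson system $V_t+VV_x=kE-\gamma V$, $E_t+VE_x=NV$ with $k=1$, $N=0$, $\gamma=0$. (The paper's text writes "$v_2(0)=0$, $v_1(0)>0$" in the second case, which is a misprint for $v_1(0)<0$.) *)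

theory Defs
  imports Complex_Main
begin

definition is_solution_on :: "real \<Rightarrow> real \<Rightarrow> real \<Rightarrow> (real \<Rightarrow> real) \<Rightarrow> (real \<Rightarrow> real) \<Rightarrow> bool" where
  "is_solution_on a b T v1 v2 \<longleftrightarrow>
     v1 0 = a \<and> v2 0 = b \<and>
     (\<forall>t\<in>{0..<T}.
        (v1 has_real_derivative (v2 t - (v1 t)^2)) (at t within {0..<T}) \<and>
        (v2 has_real_derivative (- (v1 t * v2 t))) (at t within {0..<T}))"

text \<open>The solution with initial data (a,b) blows up in finite positive time: there is a
  finite T > 0 and a solution on [0,T) whose size tends to infinity as t tends to T from the left.
  (By local Lipschitz uniqueness this is exactly: the maximal forward existence time is finite.)\<close>
definition blows_up_in_finite_time :: "real \<Rightarrow> real \<Rightarrow> bool" where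
  "blows_up_in_finite_time a b \<longleftrightarrow>
     (\<exists>T>0. \<exists>v1 v2. is_solution_on a b T v1 v2 \<and>
        filterlim (\<lambda>t. \<bar>v1 t\<bar> + \<bar>v2 t\<bar>) at_top (at_left T))"

end

theory Submission
  imports Defs
begin

text \<open>Let \<open>G(t) = 1 + v\<^sub>1(0) t + v\<^sub>2(0) t\<^sup>2/2\<close>, so that \<open>G'' = v\<^sub>2(0)\<close>. Then
  \<open>v\<^sub>1 = G'/G\<close>, \<open>v\<^sub>2 = G''/G\<close> solves the system as long as \<open>G > 0\<close>. Conversely,
  for any solution the defects \<open>v\<^sub>2 G - G''\<close> and \<open>v\<^sub>1 G - G'\<close> satisfy a linear
  homogeneous system with bounded coefficients and vanish at \<open>0\<close>, so by Gronwall they vanish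
  identically. Hence the solution blows up exactly when \<open>G\<close> has a positive root, and this
  is the stated condition on the initial data.\<close>

definition denom :: "real \<Rightarrow> real \<Rightarrow> real \<Rightarrow> real" where
  "denom a b t = 1 + a * t + b * t^2 / 2"

lemma has_real_derivative_denom:
  fixes a b t :: real
  shows "(denom a b has_real_derivative (a + b * t)) (at t within S)"
  unfolding denom_def by (auto intro!: derivative_eq_intros simp: power2_eq_square)

lemma isCont_denom:
  fixes a b t :: real
  shows "isCont (denom a b) t"
  unfolding denom_def by (intro continuous_intros) simp

lemma denom_pos:
  assumes "\<not> (b < 0 \<or> (b = 0 \<and> a < 0) \<or> (b > 0 \<and> a < 0 \<and> a^2 \<ge> 2 * b))" and "0 \<le> t"
  shows "denom a b t > 0"
proof -
  consider "b \<ge> 0" "a \<ge> 0" | "b > 0" "a^2 < 2 * b" using assms(1) by force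
  then show ?thesis
  proof cases
    case 1
    then show ?thesis using \<open>0 \<le> t\<close> by (simp add: denom_def add_pos_nonneg)
  next
    case 2
    have "2 * b * denom a b t = (b * t + a)^2 + (2 * b - a^2)"
      by (simp add: denom_def algebra_simps power2_eq_square)
    also have "\<dots> > 0" using 2 by (simp add: add_nonneg_pos)
    finally show ?thesis using 2 by (simp add: zero_less_mult_iff)
  qed
qed

lemma denom_first_root:
  assumes "b < 0 \<or> (b = 0 \<and> a < 0) \<or> (b > 0 \<and> a < 0 \<and> a^2 \<ge> 2 * b)"
  obtains T where "T > 0" "denom a b T = 0" "\<And>t. t \<in> {0..<T} \<Longrightarrow> denom a b t > 0"
proof -
  define s where "s = sqrt (a^2 - 2 * b)"
  have disc: "a^2 - 2 * b \<ge> 0" using assms zero_le_power2[of a] by linarith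
  have s2: "s^2 = a^2 - 2 * b" and s0: "s \<ge> 0" using disc by (simp_all add: s_def)
  have "a < s"
  proof (cases "b < 0")
    case True
    then have "\<bar>a\<bar>^2 < s^2" using s2 by simp
    then show ?thesis using s0 power_less_imp_less_base by fastforce
  qed (use assms s0 in auto)
  \<comment> \<open>\<open>G(t) = (1 - u\<^sub>1 t)(1 - u\<^sub>2 t)\<close> with \<open>u\<^sub>2 \<le> u\<^sub>1\<close>, so the first positive root is \<open>1/u\<^sub>1\<close>.\<close>
  define u1 where "u1 = (s - a) / 2"
  define u2 where "u2 = (- a - s) / 2"
  have u1: "u1 > 0" and u21: "u2 \<le> u1"
    using \<open>a < s\<close> s0 by (simp_all add: u1_def u2_def)
  have "u1 + u2 = - a" "u1 * u2 = b / 2"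
    using s2 by (simp_all add: u1_def u2_def field_simps power2_eq_square)
  moreover have "(1 - u1 * t) * (1 - u2 * t) = 1 - (u1 + u2) * t + (u1 * u2) * t^2" for t
    by (simp add: algebra_simps power2_eq_square)
  ultimately have factor: "denom a b t = (1 - u1 * t) * (1 - u2 * t)" for t
    by (simp add: denom_def)
  show ?thesis
  proof
    show "1 / u1 > 0" "denom a b (1 / u1) = 0" using u1 by (simp_all add: factor)
  next
    fix t assume t: "t \<in> {0..<1 / u1}"
    then have "u1 * t < 1" using u1 by (simp add: field_simps)
    moreover have "u2 * t \<le> u1 * t"
      using t u21 by (simp add: mult_right_mono)
    ultimately show "denom a b t > 0" by (simp add: factor)
  qed
qed

lemma explicit_solution:
  assumes "\<And>t. t \<in> {0..<T} \<Longrightarrow> denom a b t > 0"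
  shows "is_solution_on a b T (\<lambda>t. (a + b * t) / denom a b t) (\<lambda>t. b / denom a b t)"
  unfolding is_solution_on_def
proof (intro conjI ballI)
  show "(a + b * 0) / denom a b 0 = a" "b / denom a b 0 = b" by (simp_all add: denom_def)
next
  fix t assume "t \<in> {0..<T}"
  then have G: "denom a b t > 0" using assms by blast
  note dG = has_real_derivative_denom[of a b t "{0..<T}"]
  have "((\<lambda>t. (a + b * t) / denom a b t) has_real_derivative
      (b * denom a b t - (a + b * t) * (a + b * t)) / (denom a b t * denom a b t))
      (at t within {0..<T})"
    using G dG by (auto intro!: derivative_eq_intros)
  then show "((\<lambda>t. (a + b * t) / denom a b t) has_real_derivative
      b / denom a b t - ((a + b * t) / denom a b t)^2) (at t within {0..<T})"
    using G by (simp add: field_simps power2_eq_square)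
  have "((\<lambda>t. b / denom a b t) has_real_derivative
      (0 * denom a b t - b * (a + b * t)) / (denom a b t * denom a b t)) (at t within {0..<T})"
    using G dG by (auto intro!: derivative_eq_intros)
  moreover have "(0 * denom a b t - b * (a + b * t)) / (denom a b t * denom a b t)
      = - ((a + b * t) / denom a b t * (b / denom a b t))"
    using G by (simp add: field_simps mult.commute)
  ultimately show "((\<lambda>t. b / denom a b t) has_real_derivative
      - ((a + b * t) / denom a b t * (b / denom a b t))) (at t within {0..<T})"
    by (simp only:)
qed

lemma explicit_solution_blows_up:
  assumes "T > 0" "denom a b T = 0" "\<And>t. t \<in> {0..<T} \<Longrightarrow> denom a b t > 0"
  shows "filterlim (\<lambda>t. \<bar>(a + b * t) / denom a b t\<bar> + \<bar>b / denom a b t\<bar>) at_top (at_left T)"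
proof -
  define num where "num t = \<bar>a + b * t\<bar> + \<bar>b\<bar>" for t
  have "num T > 0"
    using assms(2) by (cases "b = 0") (auto simp: num_def denom_def)
  moreover have "(num \<longlongrightarrow> num T) (at_left T)"
    unfolding num_def by (intro tendsto_intros)
  moreover have "filterlim (denom a b) (at_right 0) (at_left T)"
    unfolding filterlim_at
  proof
    show "\<forall>\<^sub>F t in at_left T. denom a b t \<in> {0<..} \<and> denom a b t \<noteq> 0"
      using eventually_at_left_real[OF \<open>T > 0\<close>]
    proof eventually_elim
      case (elim t)
      then have "denom a b t > 0" by (intro assms(3)) auto
      then show ?case by simp
    qed
    show "(denom a b \<longlongrightarrow> 0) (at_left T)"
    proof -
      have "isCont (denom a b) T" by (rule isCont_denom)
      then show ?thesis using assms(2) by (simp add: isCont_def filterlim_at_split)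
    qed
  qed
  ultimately have "filterlim (\<lambda>t. num t * inverse (denom a b t)) at_top (at_left T)"
    using filterlim_tendsto_pos_mult_at_top filterlim_compose filterlim_inverse_at_top_right
    by blast
  moreover have "\<forall>\<^sub>F t in at_left T.
      num t * inverse (denom a b t) = \<bar>(a + b * t) / denom a b t\<bar> + \<bar>b / denom a b t\<bar>"
    using eventually_at_left_real[OF \<open>T > 0\<close>]
  proof eventually_elim
    case (elim t)
    then have "denom a b t > 0" by (intro assms(3)) auto
    then show ?case by (simp add: num_def abs_divide field_simps)
  qed
  ultimately show ?thesis using filterlim_cong by fastforce
qed

lemma gronwall_differential_inequality:
  fixes E E' :: "real \<Rightarrow> real"
  assumes "0 \<le> t1"
    and "\<And>t. t \<in> {0..t1} \<Longrightarrow> (E has_real_derivative E' t) (at t within {0..t1})"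
    and "\<And>t. t \<in> {0..t1} \<Longrightarrow> E' t \<le> M * E t"
  shows "E t1 \<le> E 0 * exp (M * t1)"
proof -
  define F where "F t = E t * exp (- M * t)" for t
  have dF: "(F has_real_derivative (E' t - M * E t) * exp (- M * t)) (at t within {0..t1})"
    if "t \<in> {0..t1}" for t
  proof -
    have "(F has_real_derivative E' t * exp (- M * t) + E t * (exp (- M * t) * (- M * 1)))
        (at t within {0..t1})"
      unfolding F_def using assms(2)[OF that] by (intro derivative_eq_intros) auto
    then show ?thesis by (simp add: algebra_simps)
  qed
  have cF: "continuous_on {0..t1} F"
    using dF DERIV_continuous continuous_on_eq_continuous_within by blast
  have "F t1 \<le> F 0"
  proof (rule DERIV_nonpos_imp_decreasing_open[OF \<open>0 \<le> t1\<close> _ cF])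
    fix x assume x: "0 < x" "x < t1"
    then have "at x within {0..t1} = at x" by (intro at_within_Icc_at) auto
    moreover have "(E' x - M * E x) * exp (- M * x) \<le> 0"
      using assms(3)[of x] x by (intro mult_nonpos_nonneg) auto
    ultimately show "\<exists>y. (F has_real_derivative y) (at x) \<and> y \<le> 0" using dF[of x] x by auto
  qed
  then have "E t1 * exp (- (M * t1)) \<le> E 0" by (simp add: F_def)
  then show ?thesis by (simp add: mult_exp_exp exp_minus field_simps)
qed

lemma defect_derivative_le:
  fixes p q w u B1 B2 :: real
  assumes w: "\<bar>w\<bar> \<le> B2" and u: "\<bar>u\<bar> \<le> B1"
  shows "2 * p * (- (w * q)) + 2 * q * (p - u * q) \<le> (1 + B2 + 2 * B1) * (p^2 + q^2)"
proof -
  have pq2: "\<bar>2 * p * q\<bar> \<le> p^2 + q^2"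
    using sum_squares_bound[of p q] sum_squares_bound[of p "-q"] by (simp add: abs_if)
  have w1: "\<bar>1 - w\<bar> \<le> 1 + B2"
    using w abs_triangle_ineq4[of 1 w] by simp
  have "(1 - w) * (2 * p * q) \<le> \<bar>1 - w\<bar> * \<bar>2 * p * q\<bar>"
    by (metis abs_ge_self abs_mult)
  also have "\<dots> \<le> (1 + B2) * (p^2 + q^2)"
    using w1 pq2 by (intro mult_mono) auto
  finally have pq: "(1 - w) * (2 * p * q) \<le> (1 + B2) * (p^2 + q^2)" .
  have "(- u) * (2 * q^2) \<le> B1 * (2 * q^2)"
    using u by (intro mult_right_mono) auto
  also have "\<dots> \<le> (2 * B1) * (p^2 + q^2)"
    using u by (simp add: algebra_simps mult_left_mono)
  finally have qq: "(- u) * (2 * q^2) \<le> (2 * B1) * (p^2 + q^2)" .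
  have "2 * p * (- (w * q)) + 2 * q * (p - u * q) = (1 - w) * (2 * p * q) + (- u) * (2 * q^2)"
    by (simp add: algebra_simps power2_eq_square)
  also have "\<dots> \<le> (1 + B2) * (p^2 + q^2) + (2 * B1) * (p^2 + q^2)"
    using pq qq by (rule add_mono)
  also have "\<dots> = (1 + B2 + 2 * B1) * (p^2 + q^2)"
    by (simp add: algebra_simps)
  finally show ?thesis .
qed

lemma solution_unique:
  assumes sol: "is_solution_on a b T v1 v2" and "t \<in> {0..<T}"
  shows "v1 t * denom a b t = a + b * t" and "v2 t * denom a b t = b"
proof -
  let ?G = "denom a b"
  define P where "P s = v2 s * ?G s - b" for s
  define Q where "Q s = v1 s * ?G s - (a + b * s)" for s
  define E where "E s = (P s)^2 + (Q s)^2" for s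
  define E' where "E' s = 2 * P s * (- (v2 s * Q s)) + 2 * Q s * (P s - v1 s * Q s)" for s
  have t: "0 \<le> t" "{0..t} \<subseteq> {0..<T}" using \<open>t \<in> {0..<T}\<close> by auto
  have d1: "(v1 has_real_derivative (v2 s - (v1 s)^2)) (at s within {0..t})"
   and d2: "(v2 has_real_derivative (- (v1 s * v2 s))) (at s within {0..t})"
    if "s \<in> {0..t}" for s
    using sol t(2) that DERIV_subset unfolding is_solution_on_def by blast+
  have "continuous_on {0..t} v1" "continuous_on {0..t} v2"
    using d1 d2 DERIV_continuous continuous_on_eq_continuous_within by blast+
  then obtain s1 s2 where "\<forall>s\<in>{0..t}. \<bar>v1 s\<bar> \<le> \<bar>v1 s1\<bar>" "\<forall>s\<in>{0..t}. \<bar>v2 s\<bar> \<le> \<bar>v2 s2\<bar>"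
    using continuous_attains_sup[OF compact_Icc _ continuous_on_rabs] t(1) by (metis empty_iff)
  then have "E' s \<le> (1 + \<bar>v2 s2\<bar> + 2 * \<bar>v1 s1\<bar>) * E s" if "s \<in> {0..t}" for s
    unfolding E'_def E_def using that by (intro defect_derivative_le) auto
  moreover have "(E has_real_derivative E' s) (at s within {0..t})" if s: "s \<in> {0..t}" for s
  proof -
    note dG = has_real_derivative_denom[of a b s "{0..t}"]
    have "(P has_real_derivative (- (v1 s * v2 s)) * ?G s + v2 s * (a + b * s)) (at s within {0..t})"
      unfolding P_def using d2[OF s] dG by (auto intro!: derivative_eq_intros)
    then have dP: "(P has_real_derivative (- (v2 s * Q s))) (at s within {0..t})"
      by (simp add: Q_def algebra_simps)
    have "(Q has_real_derivative (v2 s - (v1 s)^2) * ?G s + v1 s * (a + b * s) - b) (at s within {0..t})"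
      unfolding Q_def using d1[OF s] dG by (auto intro!: derivative_eq_intros)
    then have dQ: "(Q has_real_derivative (P s - v1 s * Q s)) (at s within {0..t})"
      by (simp add: P_def Q_def algebra_simps power2_eq_square)
    have "(E has_real_derivative 2 * P s * (- (v2 s * Q s)) + 2 * Q s * (P s - v1 s * Q s))
        (at s within {0..t})"
      unfolding E_def using dP dQ by (auto intro!: derivative_eq_intros simp: algebra_simps)
    then show ?thesis by (simp add: E'_def)
  qed
  ultimately have "E t \<le> E 0 * exp ((1 + \<bar>v2 s2\<bar> + 2 * \<bar>v1 s1\<bar>) * t)"
    using gronwall_differential_inequality[OF t(1)] by blast
  moreover have "E 0 = 0"
    using sol by (simp add: E_def P_def Q_def denom_def is_solution_on_def)
  ultimately have "P t = 0" "Q t = 0"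
    unfolding E_def by (simp_all add: sum_power2_le_zero_iff)
  then show "v1 t * ?G t = a + b * t" "v2 t * ?G t = b" by (simp_all add: P_def Q_def)
qed

lemma no_blow_up_if_denom_pos:
  assumes "T > 0" "\<And>t. t \<in> {0..T} \<Longrightarrow> denom a b t > 0" "is_solution_on a b T v1 v2"
  shows "\<not> filterlim (\<lambda>t. \<bar>v1 t\<bar> + \<bar>v2 t\<bar>) at_top (at_left T)"
proof
  define f where "f t = \<bar>(a + b * t) / denom a b t\<bar> + \<bar>b / denom a b t\<bar>" for t
  assume "filterlim (\<lambda>t. \<bar>v1 t\<bar> + \<bar>v2 t\<bar>) at_top (at_left T)"
  moreover have "\<forall>\<^sub>F t in at_left T. \<bar>v1 t\<bar> + \<bar>v2 t\<bar> = f t"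
    using eventually_at_left_real[OF \<open>T > 0\<close>]
  proof eventually_elim
    case (elim t)
    then have G: "denom a b t > 0" and "t \<in> {0..<T}" using assms(2) by auto
    then have "v1 t = (a + b * t) / denom a b t" "v2 t = b / denom a b t"
      using solution_unique[OF assms(3)] G by (auto simp: field_simps)
    then show ?case by (simp add: f_def)
  qed
  ultimately have "filterlim f at_top (at_left T)" using filterlim_cong by fastforce
  moreover have "(f \<longlongrightarrow> f T) (at_left T)"
  proof -
    have "denom a b T \<noteq> 0" using assms(1) assms(2)[of T] by simp
    then have "isCont f T" unfolding f_def by (intro continuous_intros isCont_denom)
    then show ?thesis by (simp add: isCont_def filterlim_at_split)
  qed
  ultimately show False
    using not_tendsto_and_filterlim_at_infinity[of "at_left T" f "f T"]
      filterlim_at_top_imp_at_infinity by auto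
qed

theorem mainTheorem12:
  fixes a b :: real
  shows "blows_up_in_finite_time a b \<longleftrightarrow>
           (b < 0 \<or> (b = 0 \<and> a < 0) \<or> (b > 0 \<and> a < 0 \<and> a^2 \<ge> 2 * b))"
    (is "_ \<longleftrightarrow> ?cond")
proof
  assume "blows_up_in_finite_time a b"
  then obtain T v1 v2 where "T > 0" "is_solution_on a b T v1 v2"
    "filterlim (\<lambda>t. \<bar>v1 t\<bar> + \<bar>v2 t\<bar>) at_top (at_left T)"
    unfolding blows_up_in_finite_time_def by blast
  then show ?cond using no_blow_up_if_denom_pos denom_pos by fastforce
next
  assume ?cond
  then obtain T where "T > 0" "denom a b T = 0" "\<And>t. t \<in> {0..<T} \<Longrightarrow> denom a b t > 0"
    using denom_first_root by blast
  then show "blows_up_in_finite_time a b"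
    unfolding blows_up_in_finite_time_def
    using explicit_solution explicit_solution_blows_up by blast
qed

end
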